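(* Let $x_1,\dots,x_k\in\ell^\infty$ with $|L_{x_i}|=n_i\in\mathbb{N}$ for $1\le i\le k$, and let $z=\sum_{i=1}^k a_ix_i$ with real coefficients and $a_k\ne0$. Then $$\frac{n_k}{n_1\cdots n_{k-1}}\le |L_z|\le n_1\cdots n_k.$$
   Context: $\ell^\infty$ is the space of bounded real sequences. For $x\in\ell^\infty$, $L_x$ denotes the set of accumulation points (subsequential limits) of $x$ and $|L_x|$ its cardinality. *)

theory Defs
  imports "HOL-Analysis.Analysis"
begin

definition acc_points :: "(nat \<Rightarrow> real) \<Rightarrow> real set" where
  "acc_points x = {l. \<exists>r. strict_mono r \<and> (x \<circ> r) \<longlonglongrightarrow> l}"

end

theory Submission
  imports Defs
begin

text \<open>
  By Bolzano--Weierstrass, any subsequence has a further subsequence along which each of finitely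
  many bounded sequences \<open>x\<^sub>i\<close> converges, necessarily to a point of \<open>L\<^bsub>x\<^sub>i\<^esub>\<close>.
  Hence every accumulation point of \<open>z = \<Sum> a\<^sub>i x\<^sub>i\<close> has the form \<open>\<Sum> a\<^sub>i l\<^sub>i\<close> with
  \<open>l\<^sub>i \<in> L\<^bsub>x\<^sub>i\<^esub>\<close>, which gives the upper bound. Conversely, writing
  \<open>x\<^sub>k = (z - \<Sum>\<^bsub>i<k\<^esub> a\<^sub>i x\<^sub>i) / a\<^sub>k\<close>, every accumulation point of \<open>x\<^sub>k\<close> is
  \<open>(w - \<Sum>\<^bsub>i<k\<^esub> a\<^sub>i l\<^sub>i) / a\<^sub>k\<close> with \<open>w \<in> L\<^sub>z\<close>, so \<open>n\<^sub>k \<le> |L\<^sub>z| n\<^sub>1\<cdots>n\<^bsub>k-1\<^esub>\<close>.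
\<close>

lemma finite_family_convergent_subseq:
  fixes x :: "'i \<Rightarrow> nat \<Rightarrow> 'a::heine_borel"
  assumes "finite I" "\<And>i. i \<in> I \<Longrightarrow> bounded (range (x i))"
  obtains s where "strict_mono s" "\<And>i. i \<in> I \<Longrightarrow> convergent (x i \<circ> s)"
  using assms
proof (induction I arbitrary: thesis x rule: finite_induct)
  case empty
  then show ?case using strict_mono_id by blast
next
  case (insert j I)
  obtain s where s: "strict_mono s" "\<And>i. i \<in> I \<Longrightarrow> convergent (x i \<circ> s)"
    using insert.IH insert.prems(2) by blast
  have "bounded (range (x j \<circ> s))"
    using insert.prems(2) by (rule bounded_subset) auto
  then obtain t l where t: "strict_mono t" "(x j \<circ> s \<circ> t) \<longlonglongrightarrow> l"
    using bounded_imp_convergent_subsequence by blast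
  show ?case
  proof (rule insert.prems(1))
    show "strict_mono (s \<circ> t)"
      using s(1) t(1) by (rule strict_mono_o)
    show "convergent (x i \<circ> (s \<circ> t))" if "i \<in> insert j I" for i
      using that t convergent_subseq_convergent[OF s(2) t(1)]
      by (auto simp: convergent_def comp_assoc)
  qed
qed

lemma acc_pointsI: "strict_mono r \<Longrightarrow> (x \<circ> r) \<longlonglongrightarrow> l \<Longrightarrow> l \<in> acc_points x"
  unfolding acc_points_def by blast

lemma acc_point_joint_limits:
  fixes x :: "'i \<Rightarrow> nat \<Rightarrow> real"
  assumes "finite I" "\<And>i. i \<in> I \<Longrightarrow> Bseq (x i)" "l \<in> acc_points y"
  obtains r f where "strict_mono r" "(y \<circ> r) \<longlonglongrightarrow> l"
    "f \<in> Pi\<^sub>E I (\<lambda>i. acc_points (x i))" "\<forall>i\<in>I. (x i \<circ> r) \<longlonglongrightarrow> f i"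
proof -
  obtain q where q: "strict_mono q" "(y \<circ> q) \<longlonglongrightarrow> l"
    using assms(3) unfolding acc_points_def by blast
  have "bounded (range (x i \<circ> q))" if "i \<in> I" for i
    using assms(2)[OF that] Bseq_subseq[of "x i" q] by (simp add: Bseq_eq_bounded comp_def)
  then obtain s where s: "strict_mono s" "\<And>i. i \<in> I \<Longrightarrow> convergent (x i \<circ> q \<circ> s)"
    using finite_family_convergent_subseq[OF assms(1), of "\<lambda>i. x i \<circ> q"] by blast
  define f where "f = restrict (\<lambda>i. lim (x i \<circ> q \<circ> s)) I"
  have r: "strict_mono (q \<circ> s)"
    using q(1) s(1) by (rule strict_mono_o)
  have lim: "(x i \<circ> (q \<circ> s)) \<longlonglongrightarrow> f i" if "i \<in> I" for i
    using s(2)[OF that] that by (simp add: f_def convergent_LIMSEQ_iff comp_assoc)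
  show thesis
  proof
    show "(y \<circ> (q \<circ> s)) \<longlonglongrightarrow> l"
      using LIMSEQ_subseq_LIMSEQ[OF q(2) s(1)] by (simp add: comp_assoc)
    show "f \<in> Pi\<^sub>E I (\<lambda>i. acc_points (x i))"
      using acc_pointsI[OF r lim] by (auto simp: f_def)
  qed (use r lim in auto)
qed

lemma tendsto_lincomb_subseq:
  assumes "\<forall>i\<in>I. (x i \<circ> r) \<longlonglongrightarrow> f i"
  shows "((\<lambda>m. \<Sum>i\<in>I. a i * x i m :: real) \<circ> r) \<longlonglongrightarrow> (\<Sum>i\<in>I. a i * f i)"
  using assms unfolding comp_def by (intro tendsto_intros) auto

lemma acc_points_lincomb_subset:
  fixes x :: "'i \<Rightarrow> nat \<Rightarrow> real"
  assumes "finite I" "\<And>i. i \<in> I \<Longrightarrow> Bseq (x i)"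
  shows "acc_points (\<lambda>m. \<Sum>i\<in>I. a i * x i m)
           \<subseteq> (\<lambda>f. \<Sum>i\<in>I. a i * f i) ` Pi\<^sub>E I (\<lambda>i. acc_points (x i))"
proof
  fix w assume w: "w \<in> acc_points (\<lambda>m. \<Sum>i\<in>I. a i * x i m)"
  obtain r f where "strict_mono r" and r: "((\<lambda>m. \<Sum>i\<in>I. a i * x i m) \<circ> r) \<longlonglongrightarrow> w"
    and f: "f \<in> Pi\<^sub>E I (\<lambda>i. acc_points (x i))" "\<forall>i\<in>I. (x i \<circ> r) \<longlonglongrightarrow> f i"
    by (rule acc_point_joint_limits[where x=x, OF assms w]) blast
  have "w = (\<Sum>i\<in>I. a i * f i)"
    using r tendsto_lincomb_subseq[OF f(2)] by (rule LIMSEQ_unique)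
  then show "w \<in> (\<lambda>f. \<Sum>i\<in>I. a i * f i) ` Pi\<^sub>E I (\<lambda>i. acc_points (x i))"
    using f(1) by blast
qed

lemma acc_points_isolated_term_subset:
  fixes x :: "'i \<Rightarrow> nat \<Rightarrow> real" and y :: "nat \<Rightarrow> real" and a :: "'i \<Rightarrow> real"
  assumes "finite I" "\<And>i. i \<in> I \<Longrightarrow> Bseq (x i)" "c \<noteq> 0"
  defines "z \<equiv> \<lambda>m. c * y m + (\<Sum>i\<in>I. a i * x i m)"
  shows "acc_points y \<subseteq> (\<lambda>(w, f). (w - (\<Sum>i\<in>I. a i * f i)) / c)
           ` (acc_points z \<times> Pi\<^sub>E I (\<lambda>i. acc_points (x i)))"
proof
  fix l assume l: "l \<in> acc_points y"
  obtain r f where r: "strict_mono r" "(y \<circ> r) \<longlonglongrightarrow> l"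
    and f: "f \<in> Pi\<^sub>E I (\<lambda>i. acc_points (x i))" "\<forall>i\<in>I. (x i \<circ> r) \<longlonglongrightarrow> f i"
    by (rule acc_point_joint_limits[where x=x, OF assms(1,2) l]) blast
  define w where "w = c * l + (\<Sum>i\<in>I. a i * f i)"
  have "(z \<circ> r) \<longlonglongrightarrow> w"
    using tendsto_add[OF tendsto_mult[OF tendsto_const r(2)] tendsto_lincomb_subseq[OF f(2)]]
    by (simp add: z_def w_def comp_def)
  then have "w \<in> acc_points z"
    using r(1) by (rule acc_pointsI[rotated])
  moreover have "l = (w - (\<Sum>i\<in>I. a i * f i)) / c"
    using assms(3) by (simp add: w_def)
  ultimately show "l \<in> (\<lambda>(w, f). (w - (\<Sum>i\<in>I. a i * f i)) / c)
           ` (acc_points z \<times> Pi\<^sub>E I (\<lambda>i. acc_points (x i)))"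
    using f(1) by (intro image_eqI[where x="(w, f)"]) auto
qed

lemma card_acc_points_lincomb_le:
  fixes x :: "'i \<Rightarrow> nat \<Rightarrow> real"
  assumes "finite I" "\<And>i. i \<in> I \<Longrightarrow> Bseq (x i)" "\<And>i. i \<in> I \<Longrightarrow> finite (acc_points (x i))"
  shows "finite (acc_points (\<lambda>m. \<Sum>i\<in>I. a i * x i m))"
    and "card (acc_points (\<lambda>m. \<Sum>i\<in>I. a i * x i m)) \<le> (\<Prod>i\<in>I. card (acc_points (x i)))"
proof -
  have fin: "finite (Pi\<^sub>E I (\<lambda>i. acc_points (x i)))"
    using assms(1,3) by (rule finite_PiE)
  show "finite (acc_points (\<lambda>m. \<Sum>i\<in>I. a i * x i m))"
    using fin acc_points_lincomb_subset[OF assms(1,2)] by (rule finite_surj)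
  show "card (acc_points (\<lambda>m. \<Sum>i\<in>I. a i * x i m)) \<le> (\<Prod>i\<in>I. card (acc_points (x i)))"
    using surj_card_le[OF fin acc_points_lincomb_subset[OF assms(1,2)]]
    by (simp add: card_PiE assms(1))
qed

lemma card_acc_points_isolated_term_le:
  fixes x :: "'i \<Rightarrow> nat \<Rightarrow> real" and y :: "nat \<Rightarrow> real" and a :: "'i \<Rightarrow> real"
  assumes "finite I" "\<And>i. i \<in> I \<Longrightarrow> Bseq (x i)" "\<And>i. i \<in> I \<Longrightarrow> finite (acc_points (x i))"
    and "c \<noteq> 0"
  defines "z \<equiv> \<lambda>m. c * y m + (\<Sum>i\<in>I. a i * x i m)"
  assumes "finite (acc_points z)"
  shows "card (acc_points y) \<le> card (acc_points z) * (\<Prod>i\<in>I. card (acc_points (x i)))"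
proof -
  have fin: "finite (acc_points z \<times> Pi\<^sub>E I (\<lambda>i. acc_points (x i)))"
    using assms(1,3,6) by (simp add: finite_PiE)
  have "card (acc_points y) \<le> card (acc_points z \<times> Pi\<^sub>E I (\<lambda>i. acc_points (x i)))"
    using fin acc_points_isolated_term_subset[OF assms(1,2,4)] unfolding z_def by (rule surj_card_le)
  then show ?thesis
    by (simp add: card_cartesian_product card_PiE assms(1))
qed

theorem lemma2p5:
  fixes x :: "nat \<Rightarrow> nat \<Rightarrow> real" and a :: "nat \<Rightarrow> real" and k :: nat
  assumes "k \<ge> 1"
    and "\<And>i. i \<in> {1..k} \<Longrightarrow> Bseq (x i)"
    and "\<And>i. i \<in> {1..k} \<Longrightarrow> finite (acc_points (x i))"
    and "a k \<noteq> 0"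
  defines "z \<equiv> (\<lambda>m. \<Sum>i=1..k. a i * x i m)"
  shows "real (card (acc_points (x k))) / (\<Prod>i=1..k-1. real (card (acc_points (x i))))
           \<le> real (card (acc_points z))
         \<and> finite (acc_points z)
         \<and> card (acc_points z) \<le> (\<Prod>i=1..k. card (acc_points (x i)))"
proof -
  have fin: "finite (acc_points z)" and upper: "card (acc_points z) \<le> (\<Prod>i=1..k. card (acc_points (x i)))"
    using card_acc_points_lincomb_le[of "{1..k}" x a] assms(2,3) by (simp_all add: z_def)
  have "{1..k} = insert k {1..k-1}"
    using assms(1) by auto
  then have z_split: "z = (\<lambda>m. a k * x k m + (\<Sum>i=1..k-1. a i * x i m))"
    using assms(1) by (simp add: z_def)
  have bseq: "Bseq (x i)" and fin_acc: "finite (acc_points (x i))" if "i \<in> {1..k-1}" for i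
    using that assms(2,3) by auto
  have "card (acc_points (x k)) \<le> card (acc_points z) * (\<Prod>i=1..k-1. card (acc_points (x i)))"
    unfolding z_split
  proof (rule card_acc_points_isolated_term_le)
    show "finite (acc_points (\<lambda>m. a k * x k m + (\<Sum>i=1..k-1. a i * x i m)))"
      using fin unfolding z_split .
  qed (simp_all add: bseq fin_acc assms(4))
  then have "real (card (acc_points (x k)))
      \<le> real (card (acc_points z)) * (\<Prod>i=1..k-1. real (card (acc_points (x i))))"
    unfolding of_nat_prod[symmetric] of_nat_mult[symmetric] by (rule of_nat_mono)
  moreover have "0 \<le> (\<Prod>i=1..k-1. real (card (acc_points (x i))))"
    by (rule prod_nonneg) simp
  ultimately have lower: "real (card (acc_points (x k))) / (\<Prod>i=1..k-1. real (card (acc_points (x i))))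
      \<le> real (card (acc_points z))"
    by (simp add: divide_le_eq)
  show ?thesis
    using lower fin upper by blast
qed

end
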